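(* Let $d\ge2$. Then $$\sum_{k\ge1}W(D_{n_k-1,d};q)z^k=z\,\frac{(d+1)q+\binom{d+1}{2}q^2(1+z)}{(1-z)(1-dz)(1-d^2q^2z)}.$$
   Context: For a connected graph $G$, $W(G;q)=\sum_{\{u,v\}}q^{d(u,v)}$ over unordered pairs of distinct vertices, $d$ the graph distance. The $d$-ary dendrimer $D_{n,d}$ is the tree on vertex set $\{1,\ldots,n\}$ defined inductively: $D_{1,d}$ is the single vertex $1$, and $D_{n,d}$ is obtained from $D_{n-1,d}$ by attaching a new leaf $n$ to the smallest-numbered vertex of $D_{n-1,d}$ having degree $\le d$. $n_k=2+(d+1)\frac{d^k-1}{d-1}$; thus $D_{n_k-1,d}$ is the complete dendrimer in which the root has $d+1$ children, every other non-leaf has $d$ children, and all leaves are at distance $k$ from the root. *)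

theory Defs
  imports Complex_Main "HOL-Computational_Algebra.Formal_Power_Series"
begin

(* Edge set of the d-ary dendrimer D_{n,d} on vertex set {1..n}; edges are 2-element sets.
   Vertex Suc(Suc n) is attached to the smallest vertex of D_{Suc n,d} of degree <= d. *)
fun dend_edges :: "nat \<Rightarrow> nat \<Rightarrow> nat set set" where
  "dend_edges d 0 = {}"
| "dend_edges d (Suc 0) = {}"
| "dend_edges d (Suc (Suc n)) =
     (let E = dend_edges d (Suc n)
      in insert {LEAST v. v \<in> {1..Suc n} \<and> card {e \<in> E. v \<in> e} \<le> d, Suc (Suc n)} E)"

definition is_walk :: "'a set set \<Rightarrow> 'a list \<Rightarrow> bool" where
  "is_walk E xs \<longleftrightarrow> xs \<noteq> [] \<and> (\<forall>i. Suc i < length xs \<longrightarrow> {xs ! i, xs ! Suc i} \<in> E)"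

definition gdist :: "'a set set \<Rightarrow> 'a \<Rightarrow> 'a \<Rightarrow> nat" where
  "gdist E u v = (LEAST k. \<exists>xs. is_walk E xs \<and> length xs = Suc k \<and> hd xs = u \<and> last xs = v)"

definition wiener_poly :: "'a set \<Rightarrow> 'a set set \<Rightarrow> real \<Rightarrow> real" where
  "wiener_poly V E q = (\<Sum>p \<in> {p. p \<subseteq> V \<and> card p = 2}.
       q ^ gdist E (SOME u. u \<in> p) (SOME v. v \<in> p \<and> v \<noteq> (SOME u. u \<in> p)))"

definition dend_W :: "nat \<Rightarrow> nat \<Rightarrow> real \<Rightarrow> real" where
  "dend_W d n q = wiener_poly {1..n} (dend_edges d n) q"

definition n_k :: "nat \<Rightarrow> nat \<Rightarrow> nat" where
  "n_k d k = 2 + (d + 1) * ((d ^ k - 1) div (d - 1))"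

end

theory Submission
  imports Defs
begin

text \<open>
  Vertex \<open>w \<ge> 2\<close> of \<open>D\<^sub>n\<^sub>,\<^sub>d\<close> is attached to \<open>(w - 3) div d + 1\<close>, so \<open>D\<^sub>n\<^sub>,\<^sub>d\<close> is an increasing
  tree, and the distance of two vertices is the least \<open>i + j\<close> for which the \<open>i\<close>-th ancestor of
  the one equals the \<open>j\<close>-th ancestor of the other.

  In the complete dendrimer let \<open>L k\<close> be the vertices of depth \<open>k\<close>, \<open>T k\<close> those of depth at most
  \<open>k\<close>, and let \<open>R k\<close>, \<open>A k\<close>, \<open>F k\<close> be the sums of \<open>q ^ dist\<close> over \<open>L k \<times> L k\<close>, \<open>T k \<times> L k\<close>
  and \<open>T k \<times> T k\<close>. Two distinct vertices of \<open>L (k + 1)\<close> are two steps further apart than their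
  parents, a vertex of \<open>L (k + 1)\<close> is one step further from \<open>T k\<close> than its parent, and every
  vertex of \<open>L k\<close> has \<open>d\<close> children (the root \<open>d + 1\<close>). This gives first-order recurrences for
  \<open>R\<close>, \<open>A\<close> and \<open>F\<close>, from which the shift operator \<open>(E - 1)(E - d)(E - d\<^sup>2 q\<^sup>2)\<close> annihilates
  \<open>W k = (F k - |T k|) / 2\<close> from index 1 on. Hence the generating function has the stated
  denominator, and its numerator is read off from \<open>W 0, \<dots>, W 3\<close>.
\<close>

section \<open>Graph distance and the Wiener polynomial\<close>

lemma is_walk_Cons_Cons:
  "is_walk E (x # y # xs) \<longleftrightarrow> {x, y} \<in> E \<and> is_walk E (y # xs)"
  unfolding is_walk_def by (auto simp: nth_Cons split: nat.splits)

lemma is_walk_rev [simp]: "is_walk E (rev xs) \<longleftrightarrow> is_walk E xs"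
proof -
  have rev_walk: "is_walk E (rev ys)" if "is_walk E ys" for ys
    unfolding is_walk_def
  proof (intro conjI allI impI)
    show "rev ys \<noteq> []" using that by (simp add: is_walk_def)
  next
    fix i assume i: "Suc i < length (rev ys)"
    define j where "j = length ys - Suc (Suc i)"
    have "Suc j < length ys" "length ys - Suc i = Suc j" using i by (auto simp: j_def)
    then have "{ys ! Suc j, ys ! j} \<in> E" using that by (auto simp: is_walk_def insert_commute)
    then show "{rev ys ! i, rev ys ! Suc i} \<in> E"
      using i \<open>length ys - Suc i = Suc j\<close> by (simp add: rev_nth j_def)
  qed
  show ?thesis using rev_walk[of xs] rev_walk[of "rev xs"] by auto
qed

lemma gdist_sym: "gdist E u v = gdist E v u"
proof -
  have "(\<exists>xs. is_walk E xs \<and> length xs = Suc k \<and> hd xs = u \<and> last xs = v)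
    \<longleftrightarrow> (\<exists>xs. is_walk E xs \<and> length xs = Suc k \<and> hd xs = v \<and> last xs = u)" for k u v
    by (metis hd_rev last_rev is_walk_rev length_rev)
  then show ?thesis unfolding gdist_def by simp
qed

lemma gdist_self [simp]: "gdist E u u = 0"
  unfolding gdist_def by (rule Least_eq_0) (auto intro!: exI[of _ "[u]"] simp: is_walk_def)

lemma gdist_of_some_pair:
  assumes "u \<noteq> v"
  shows "gdist E (SOME x. x \<in> {u, v}) (SOME y. y \<in> {u, v} \<and> y \<noteq> (SOME x. x \<in> {u, v})) = gdist E u v"
proof -
  define x where "x = (SOME x. x \<in> {u, v})"
  have x: "x \<in> {u, v}" unfolding x_def by (rule someI[of _ u]) simp
  define y where "y = (SOME y. y \<in> {u, v} \<and> y \<noteq> x)"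
  have "\<exists>y. y \<in> {u, v} \<and> y \<noteq> x" using assms x by auto
  then have "y \<in> {u, v} \<and> y \<noteq> x" unfolding y_def by (rule someI_ex)
  then show ?thesis using x gdist_sym unfolding x_def[symmetric] y_def[symmetric] by auto
qed

lemma wiener_poly_eq_sum_ordered_pairs:
  assumes "finite V"
  shows "wiener_poly V E q = ((\<Sum>u\<in>V. \<Sum>v\<in>V. q ^ gdist E u v) - card V) / 2"
proof -
  define f where "f = (\<lambda>(u, v). q ^ gdist E u v)"
  define S2 where "S2 = {p. p \<subseteq> V \<and> card p = 2}"
  define h where "h = (\<lambda>p. q ^ gdist E (SOME u. u \<in> p) (SOME v. v \<in> p \<and> v \<noteq> (SOME u. u \<in> p)))"
  define Off where "Off = {x \<in> V \<times> V. fst x \<noteq> snd x}"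
  have f_swap: "f (v, u) = f (u, v)" for u v by (simp add: f_def gdist_sym)
  have h_pair: "h {u, v} = f (u, v)" if "u \<noteq> v" for u v
    using gdist_of_some_pair[OF that] by (simp add: h_def f_def)
  have fibre: "(\<Sum>x\<in>{x \<in> Off. {fst x, snd x} = p}. f x) = 2 * h p" if p_S2: "p \<in> S2" for p
  proof -
    obtain a b where p: "p = {a, b}" "a \<noteq> b" "a \<in> V" "b \<in> V"
      using p_S2 by (auto simp: S2_def card_2_iff)
    then have "{x \<in> Off. {fst x, snd x} = p} = {(a, b), (b, a)}"
      by (auto simp: Off_def doubleton_eq_iff)
    then show ?thesis using p h_pair f_swap by simp
  qed
  have "finite Off" "finite S2" using assms by (auto simp: Off_def S2_def)
  moreover have "(\<lambda>x. {fst x, snd x}) ` Off \<subseteq> S2" by (auto simp: Off_def S2_def card_2_iff)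
  ultimately have "sum f Off = (\<Sum>p\<in>S2. 2 * h p)"
    by (subst sum.group[symmetric]) (auto simp: fibre)
  moreover have "(\<Sum>u\<in>V. \<Sum>v\<in>V. q ^ gdist E u v) = sum f Off + card V"
  proof -
    have "V \<times> V = Off \<union> (\<lambda>u. (u, u)) ` V" by (auto simp: Off_def)
    moreover have "Off \<inter> (\<lambda>u. (u, u)) ` V = {}" by (auto simp: Off_def)
    ultimately have "sum f (V \<times> V) = sum f Off + sum f ((\<lambda>u. (u, u)) ` V)"
      using assms \<open>finite Off\<close> by (simp add: sum.union_disjoint)
    also have "sum f ((\<lambda>u. (u, u)) ` V) = card V" by (simp add: sum.reindex inj_on_def f_def)
    finally show ?thesis by (simp add: sum.cartesian_product f_def)
  qed
  ultimately show ?thesis by (simp add: wiener_poly_def h_def S2_def flip: sum_distrib_left)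
qed

section \<open>Increasing trees\<close>

text \<open>Vertices are \<open>1, 2, \<dots>\<close> with root \<open>1\<close> and parent map \<open>p\<close>; the root, and the
  non-vertex \<open>0\<close>, are mapped to \<open>1\<close>.\<close>
locale increasing_tree =
  fixes p :: "nat \<Rightarrow> nat"
  assumes parent_less: "2 \<le> w \<Longrightarrow> p w < w"
    and parent_pos: "2 \<le> w \<Longrightarrow> 1 \<le> p w"
    and parent_root: "w \<le> 1 \<Longrightarrow> p w = 1"
begin

definition tree_edges :: "nat \<Rightarrow> nat set set" where
  "tree_edges n = (\<lambda>w. {w, p w}) ` {2..n}"

definition tree_dist :: "nat \<Rightarrow> nat \<Rightarrow> nat" where
  "tree_dist u v = (LEAST s. \<exists>i j. s = i + j \<and> (p ^^ i) u = (p ^^ j) v)"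

lemma parent_ge_1: "1 \<le> p w"
  using parent_pos[of w] parent_root[of w] by linarith

lemma parent_le: "1 \<le> w \<Longrightarrow> p w \<le> w"
  using parent_less[of w] parent_root[of w] by linarith

lemma ancestor_bounds: "1 \<le> u \<Longrightarrow> 1 \<le> (p ^^ j) u \<and> (p ^^ j) u \<le> u"
proof (induction j)
  case (Suc j)
  then show ?case using parent_ge_1[of "(p ^^ j) u"] parent_le[of "(p ^^ j) u"] by simp
qed simp

lemma ancestor_of_root [simp]: "(p ^^ j) 1 = 1"
  by (induction j) (simp_all add: parent_root)

lemma ancestor_Suc: "(p ^^ Suc j) u = (p ^^ j) (p u)"
  by (simp add: funpow_swap1)

lemma root_is_ancestor: "\<exists>i. (p ^^ i) u = 1"
proof (induction u rule: less_induct)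
  case (less u)
  show ?case
  proof (cases "2 \<le> u")
    case True
    then obtain i where "(p ^^ i) (p u) = 1" using less parent_less by blast
    then show ?thesis by (metis ancestor_Suc)
  next
    case False
    then have "(p ^^ 1) u = 1" using parent_root by simp
    then show ?thesis by blast
  qed
qed

lemma tree_dist_witness:
  obtains i j where "tree_dist u v = i + j" "(p ^^ i) u = (p ^^ j) v"
proof -
  obtain i j where "(p ^^ i) u = 1" "(p ^^ j) v = 1" using root_is_ancestor by metis
  then have "\<exists>s i j. s = i + j \<and> (p ^^ i) u = (p ^^ j) v" by metis
  from LeastI_ex[OF this] show ?thesis using that unfolding tree_dist_def by blast
qed

lemma tree_dist_le: "(p ^^ i) u = (p ^^ j) v \<Longrightarrow> tree_dist u v \<le> i + j"
  unfolding tree_dist_def by (rule Least_le) auto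

lemma tree_dist_self [simp]: "tree_dist u u = 0"
  using tree_dist_le[of 0 u 0 u] by simp

lemma tree_dist_sym: "tree_dist u v = tree_dist v u"
proof -
  have "tree_dist u v \<le> tree_dist v u" for u v
  proof -
    obtain i j where "tree_dist v u = i + j" "(p ^^ i) v = (p ^^ j) u"
      by (rule tree_dist_witness)
    then show ?thesis using tree_dist_le[of j u i v] by simp
  qed
  then show ?thesis by (simp add: le_antisym)
qed

lemma tree_dist_eq_0_iff: "tree_dist u v = 0 \<longleftrightarrow> u = v"
proof
  assume "tree_dist u v = 0"
  moreover obtain i j where "tree_dist u v = i + j" "(p ^^ i) u = (p ^^ j) v"
    by (rule tree_dist_witness)
  ultimately show "u = v" by simp
qed simp

lemma tree_dist_le_parent: "tree_dist w v \<le> tree_dist (p w) v + 1"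
proof -
  obtain i j where "tree_dist (p w) v = i + j" "(p ^^ i) (p w) = (p ^^ j) v"
    by (rule tree_dist_witness)
  then show ?thesis using tree_dist_le[of "Suc i" w j v] by (simp only: ancestor_Suc) simp
qed

lemma tree_dist_parent_le: "tree_dist (p w) v \<le> tree_dist w v + 1"
proof -
  obtain i j where ij: "tree_dist w v = i + j" "(p ^^ i) w = (p ^^ j) v"
    by (rule tree_dist_witness)
  show ?thesis
  proof (cases i)
    case 0
    then have "(p ^^ 0) (p w) = (p ^^ Suc j) v" using ij by simp
    then show ?thesis using tree_dist_le ij 0 by fastforce
  next
    case (Suc i')
    then have "(p ^^ i') (p w) = (p ^^ j) v" using ij by (simp only: ancestor_Suc)
    then show ?thesis using tree_dist_le ij Suc by fastforce
  qed
qed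

text \<open>All ancestors of \<open>v\<close> lie below \<open>u\<close>, so a shortest connection leaves \<open>u\<close> through its parent.\<close>
lemma tree_dist_parent_left:
  assumes "1 \<le> v" "v < u"
  shows "tree_dist u v = tree_dist (p u) v + 1"
proof -
  obtain i j where ij: "tree_dist u v = i + j" "(p ^^ i) u = (p ^^ j) v"
    by (rule tree_dist_witness)
  moreover have "i \<noteq> 0"
  proof
    assume "i = 0"
    then have "u = (p ^^ j) v" using ij by simp
    then show False using ancestor_bounds[of v j] assms by simp
  qed
  then obtain i' where "i = Suc i'" by (metis not0_implies_Suc)
  ultimately have "(p ^^ i') (p u) = (p ^^ j) v" by (simp only: ancestor_Suc)
  then have "tree_dist (p u) v \<le> i' + j" by (rule tree_dist_le)
  then show ?thesis using tree_dist_le_parent[of u v] ij \<open>i = Suc i'\<close> by simp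
qed

lemma tree_dist_parents:
  assumes "u \<noteq> v" "p u < v" "p v < u"
  shows "tree_dist u v = tree_dist (p u) (p v) + 2"
proof -
  have not_ancestor: "(p ^^ j) y \<noteq> x" if "x \<noteq> y" "p y < x" for x y j
  proof (cases j)
    case (Suc j')
    then have "(p ^^ j) y = (p ^^ j') (p y)" by (simp only: ancestor_Suc)
    then have "(p ^^ j) y \<le> p y" using ancestor_bounds[OF parent_ge_1] by simp
    then show ?thesis using that by simp
  qed (use that in simp)
  obtain i j where ij: "tree_dist u v = i + j" "(p ^^ i) u = (p ^^ j) v"
    by (rule tree_dist_witness)
  then obtain i' j' where "i = Suc i'" "j = Suc j'"
    using not_ancestor assms by (metis funpow_0 not0_implies_Suc)
  with ij have "(p ^^ i') (p u) = (p ^^ j') (p v)" by (simp only: ancestor_Suc)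
  then have "tree_dist (p u) (p v) \<le> i' + j'" by (rule tree_dist_le)
  moreover obtain a b where "tree_dist (p u) (p v) = a + b" "(p ^^ a) (p u) = (p ^^ b) (p v)"
    by (rule tree_dist_witness)
  then have "(p ^^ Suc a) u = (p ^^ Suc b) v" by (simp only: ancestor_Suc)
  then have "tree_dist u v \<le> tree_dist (p u) (p v) + 2"
    using tree_dist_le \<open>tree_dist (p u) (p v) = a + b\<close> by fastforce
  ultimately show ?thesis using ij \<open>i = Suc i'\<close> \<open>j = Suc j'\<close> by simp
qed

lemma tree_dist_le_walk_length:
  "is_walk (tree_edges n) xs \<Longrightarrow> tree_dist (hd xs) (last xs) \<le> length xs - 1"
proof (induction xs rule: induct_list012)
  case (3 x y zs)
  then have edge: "{x, y} \<in> tree_edges n"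
    and IH: "tree_dist y (last (y # zs)) \<le> length zs"
    by (simp_all add: is_walk_Cons_Cons)
  obtain w where "{x, y} = {w, p w}" using edge by (auto simp: tree_edges_def)
  then have "x = w \<and> y = p w \<or> x = p w \<and> y = w" by (auto simp: doubleton_eq_iff)
  then have "tree_dist x z \<le> tree_dist y z + 1" for z
    using tree_dist_le_parent[of w z] tree_dist_parent_le[of w z] by auto
  from this[of "last (y # zs)"] show ?case using IH by simp
qed (simp_all add: is_walk_def)

lemma tree_dist_Suc_neighbour:
  assumes u: "u \<in> {1..n}" and v: "v \<in> {1..n}" and k: "tree_dist u v = Suc k"
  shows "\<exists>w \<in> {1..n}. {u, w} \<in> tree_edges n \<and> tree_dist w v = k"
proof -
  obtain i j where ij: "tree_dist u v = i + j" "(p ^^ i) u = (p ^^ j) v"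
    by (rule tree_dist_witness)
  show ?thesis
  proof (cases i)
    case (Suc i')
    have "u \<noteq> 1"
    proof
      assume "u = 1"
      then have "(p ^^ 0) u = (p ^^ j) v" using ij ancestor_of_root by (metis funpow_0)
      then have "tree_dist u v \<le> 0 + j" by (rule tree_dist_le)
      then show False using ij Suc by simp
    qed
    then have "{u, p u} \<in> tree_edges n" "p u \<in> {1..n}"
      using u parent_ge_1[of u] parent_le[of u] by (auto simp: tree_edges_def)
    moreover have "(p ^^ i') (p u) = (p ^^ j) v" using ij Suc by (simp only: ancestor_Suc)
    then have "tree_dist (p u) v \<le> k" using tree_dist_le ij Suc k by fastforce
    then have "tree_dist (p u) v = k" using tree_dist_le_parent[of u v] k by simp
    ultimately show ?thesis by blast
  next
    case 0
    then obtain j' where j': "j = Suc j'" using ij k by (cases j) auto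
    define w where "w = (p ^^ j') v"
    have pw: "p w = u" using ij 0 j' by (simp add: w_def)
    have w: "1 \<le> w" "w \<le> v" using ancestor_bounds[of v j'] v by (auto simp: w_def)
    have "w \<noteq> 1"
    proof
      assume "w = 1"
      then have "tree_dist u v \<le> 0 + j'" using pw parent_root by (intro tree_dist_le) (simp add: w_def)
      then show False using ij 0 j' by simp
    qed
    then have "{u, w} \<in> tree_edges n" "w \<in> {1..n}"
      using w v pw by (auto simp: tree_edges_def insert_commute)
    moreover have "tree_dist w v \<le> j'" using tree_dist_le[of 0 w j' v] by (simp add: w_def)
    then have "tree_dist w v = k" using tree_dist_parent_le[of w v] pw k ij 0 j' by simp
    ultimately show ?thesis by blast
  qed
qed

lemma walk_of_tree_dist:
  assumes "u \<in> {1..n}" "v \<in> {1..n}"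
  shows "\<exists>xs. is_walk (tree_edges n) xs \<and> length xs = Suc (tree_dist u v) \<and> hd xs = u \<and> last xs = v"
  using assms(1)
proof (induction "tree_dist u v" arbitrary: u)
  case 0
  then show ?case by (intro exI[of _ "[u]"]) (simp add: is_walk_def tree_dist_eq_0_iff)
next
  case (Suc k)
  obtain w where w: "w \<in> {1..n}" "{u, w} \<in> tree_edges n" "tree_dist w v = k"
    using tree_dist_Suc_neighbour Suc.prems assms(2) Suc.hyps(2) by metis
  obtain xs where xs: "is_walk (tree_edges n) xs" "length xs = Suc k" "hd xs = w" "last xs = v"
    using Suc.hyps(1)[OF w(3)[symmetric] w(1)] unfolding w(3) by blast
  then obtain ys where "xs = w # ys" by (cases xs) auto
  then show ?case using w xs Suc.hyps(2)
    by (intro exI[of _ "u # xs"]) (simp add: is_walk_Cons_Cons)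
qed

lemma gdist_tree_edges:
  assumes "u \<in> {1..n}" "v \<in> {1..n}"
  shows "gdist (tree_edges n) u v = tree_dist u v"
  unfolding gdist_def
proof (rule Least_equality)
  show "\<exists>xs. is_walk (tree_edges n) xs \<and> length xs = Suc (tree_dist u v) \<and> hd xs = u \<and> last xs = v"
    using walk_of_tree_dist[OF assms] .
next
  fix k assume "\<exists>xs. is_walk (tree_edges n) xs \<and> length xs = Suc k \<and> hd xs = u \<and> last xs = v"
  then show "tree_dist u v \<le> k" using tree_dist_le_walk_length by fastforce
qed

lemma card_tree_edges_containing:
  "card {e \<in> tree_edges n. v \<in> e} = card ({v} \<inter> {2..n}) + card {w \<in> {2..n}. p w = v}"
proof -
  have "inj_on (\<lambda>w. {w, p w}) {2..}"
  proof (rule inj_onI)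
    fix x y assume "x \<in> {2..}" "y \<in> {2..}" "{x, p x} = {y, p y}"
    then show "x = y" using parent_less[of x] parent_less[of y] by (auto simp: doubleton_eq_iff)
  qed
  then have "inj_on (\<lambda>w. {w, p w}) ({v} \<inter> {2..n} \<union> {w \<in> {2..n}. p w = v})"
    by (rule inj_on_subset) auto
  moreover have "{e \<in> tree_edges n. v \<in> e} = (\<lambda>w. {w, p w}) ` ({v} \<inter> {2..n} \<union> {w \<in> {2..n}. p w = v})"
    by (auto simp: tree_edges_def)
  ultimately have "card {e \<in> tree_edges n. v \<in> e} = card ({v} \<inter> {2..n} \<union> {w \<in> {2..n}. p w = v})"
    by (simp add: card_image)
  also have "\<dots> = card ({v} \<inter> {2..n}) + card {w \<in> {2..n}. p w = v}"
    using parent_less[of v] by (intro card_Un_disjoint) auto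
  finally show ?thesis .
qed

definition dist_sum :: "real \<Rightarrow> nat set \<Rightarrow> nat set \<Rightarrow> real" where
  "dist_sum q A B = (\<Sum>u\<in>A. \<Sum>v\<in>B. q ^ tree_dist u v)"

lemma dist_sum_commute: "dist_sum q A B = dist_sum q B A"
  unfolding dist_sum_def by (subst sum.swap) (simp add: tree_dist_sym)

lemma dist_sum_Un_left:
  "finite A \<Longrightarrow> finite A' \<Longrightarrow> A \<inter> A' = {} \<Longrightarrow> dist_sum q (A \<union> A') B = dist_sum q A B + dist_sum q A' B"
  unfolding dist_sum_def by (rule sum.union_disjoint)

lemma dist_sum_Un_right:
  "finite B \<Longrightarrow> finite B' \<Longrightarrow> B \<inter> B' = {} \<Longrightarrow> dist_sum q A (B \<union> B') = dist_sum q A B + dist_sum q A B'"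
  unfolding dist_sum_def by (simp add: sum.union_disjoint sum.distrib)

lemma dist_sum_singleton [simp]: "dist_sum q {v} {v} = 1"
  by (simp add: dist_sum_def)

end

section \<open>Second-order linear recurrences\<close>

text \<open>\<open>annihilated_by a b f\<close>: the shift operator polynomial \<open>(E - a)(E - b)\<close> kills \<open>f\<close> from index 1 on.\<close>
definition annihilated_by :: "real \<Rightarrow> real \<Rightarrow> (nat \<Rightarrow> real) \<Rightarrow> bool" where
  "annihilated_by a b f \<longleftrightarrow> (\<forall>k. f (k + 3) - (a + b) * f (k + 2) + a * b * f (k + 1) = 0)"

lemma annihilated_by_commute: "annihilated_by a b f \<longleftrightarrow> annihilated_by b a f"
  by (simp add: annihilated_by_def add.commute mult.commute)

lemma annihilated_by_cong: "annihilated_by a b f \<Longrightarrow> (\<And>k. g (Suc k) = f (Suc k)) \<Longrightarrow> annihilated_by a b g"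
  by (simp add: annihilated_by_def numeral_eq_Suc)

lemma annihilated_by_add:
  "annihilated_by a b f \<Longrightarrow> annihilated_by a b g \<Longrightarrow> annihilated_by a b (\<lambda>k. f k + g k)"
  unfolding annihilated_by_def by (simp add: algebra_simps)

lemma annihilated_by_scale: "annihilated_by a b f \<Longrightarrow> annihilated_by a b (\<lambda>k. x * f k)"
  unfolding annihilated_by_def by (metis (no_types) mult_zero_right right_diff_distrib distrib_left mult.left_commute)

lemma annihilated_by_shift: "annihilated_by a b f \<Longrightarrow> annihilated_by a b (\<lambda>k. f (Suc k))"
  unfolding annihilated_by_def by (metis add_Suc)

lemma annihilated_by_first_order:
  assumes "\<And>k. f (k + 2) = a * f (k + 1) + g (k + 2)" and "\<And>k. g (k + 3) = b * g (k + 2)"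
  shows "annihilated_by a b f"
  unfolding annihilated_by_def
proof
  fix k
  have "f (k + 3) - (a + b) * f (k + 2) + a * b * f (k + 1)
      = (f (k + 3) - a * f (k + 2)) - b * (f (k + 2) - a * f (k + 1))" by (simp add: algebra_simps)
  also have "\<dots> = g (k + 3) - b * g (k + 2)"
    using assms(1)[of k] assms(1)[of "Suc k"] by (simp add: numeral_eq_Suc)
  finally show "f (k + 3) - (a + b) * f (k + 2) + a * b * f (k + 1) = 0" using assms(2) by simp
qed

lemma annihilated_by_first_order_inhomogeneous:
  assumes rec: "\<And>k. f (k + 2) = r * f (k + 1) + g (k + 2)" and "annihilated_by a b g"
    and init: "f 3 - (a + b) * f 2 + a * b * f 1 = 0"
  shows "annihilated_by a b f"
  unfolding annihilated_by_def
proof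
  fix k
  show "f (k + 3) - (a + b) * f (k + 2) + a * b * f (k + 1) = 0"
  proof (induction k)
    case (Suc k)
    have "f (Suc k + 3) - (a + b) * f (Suc k + 2) + a * b * f (Suc k + 1)
        = r * (f (k + 3) - (a + b) * f (k + 2) + a * b * f (k + 1))
          + (g (Suc k + 3) - (a + b) * g (Suc k + 2) + a * b * g (Suc k + 1))"
      using rec[of "k + 2"] rec[of "k + 1"] rec[of k] by (simp add: algebra_simps numeral_eq_Suc)
    also have "g (Suc k + 3) - (a + b) * g (Suc k + 2) + a * b * g (Suc k + 1) = 0"
      using \<open>annihilated_by a b g\<close> unfolding annihilated_by_def by blast
    finally show ?case unfolding Suc.IH by simp
  qed (use init in \<open>simp add: numeral_eq_Suc\<close>)
qed

lemma annihilated_by_differences: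
  "annihilated_by a b (\<lambda>k. w (Suc k) - w k) \<longleftrightarrow>
    (\<forall>k. w (k + 4) - (1 + a + b) * w (k + 3) + (a + b + a * b) * w (k + 2) - a * b * w (k + 1) = 0)"
  unfolding annihilated_by_def by (simp add: numeral_eq_Suc algebra_simps)

section \<open>Power series with a cubic denominator\<close>

unbundle fps_syntax

lemma fps_mult_one_minus_const_X_nth:
  fixes f :: "'a::comm_ring_1 fps"
  shows "(f * (1 - fps_const a * fps_X)) $ n = f $ n - (if n = 0 then 0 else a * f $ (n - 1))"
proof -
  have "f * (1 - fps_const a * fps_X) = f - fps_const a * (fps_X * f)" by (simp add: algebra_simps)
  then show ?thesis by simp
qed

lemma fps_mult_cubic_nth:
  fixes w :: "nat \<Rightarrow> 'a::comm_ring_1"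
  shows "(Abs_fps w * ((1 - fps_X) * (1 - fps_const a * fps_X) * (1 - fps_const b * fps_X))) $ n
    = w n - (1 + a + b) * (if 1 \<le> n then w (n - 1) else 0) + (a + b + a * b) * (if 2 \<le> n then w (n - 2) else 0)
      - a * b * (if 3 \<le> n then w (n - 3) else 0)"
proof -
  have "1 - fps_X = 1 - fps_const 1 * (fps_X :: 'a fps)" by simp
  then show ?thesis
    by (simp only: mult.assoc[symmetric])
      (auto simp: fps_mult_one_minus_const_X_nth algebra_simps numeral_eq_Suc diff_Suc not_less_eq_eq
        split: nat.split)
qed

section \<open>The dendrimer as an increasing tree\<close>

text \<open>The root receives the vertices \<open>2, \<dots>, d + 2\<close>, and then every vertex in turn the next \<open>d\<close>.\<close>
definition dend_parent :: "nat \<Rightarrow> nat \<Rightarrow> nat" where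
  "dend_parent d w = (w - 3) div d + 1"

locale dendrimer =
  fixes d :: nat
  assumes d_pos: "0 < d"

sublocale dendrimer \<subseteq> increasing_tree "dend_parent d"
proof
  fix w :: nat
  have "(w - 3) div d \<le> w - 3" by (rule div_le_dividend)
  then show "2 \<le> w \<Longrightarrow> dend_parent d w < w" unfolding dend_parent_def by linarith
  show "2 \<le> w \<Longrightarrow> 1 \<le> dend_parent d w" "w \<le> 1 \<Longrightarrow> dend_parent d w = 1"
    by (simp_all add: dend_parent_def)
qed

context dendrimer
begin

lemma le_dend_parent_iff:
  assumes "2 \<le> x"
  shows "x \<le> dend_parent d w \<longleftrightarrow> d * (x - 1) + 3 \<le> w"
proof -
  have "x \<le> dend_parent d w \<longleftrightarrow> x - 1 \<le> (w - 3) div d"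
    using assms by (auto simp: dend_parent_def)
  also have "\<dots> \<longleftrightarrow> (x - 1) * d \<le> w - 3"
    using d_pos by (simp add: less_eq_div_iff_mult_less_eq)
  finally have "x \<le> dend_parent d w \<longleftrightarrow> (x - 1) * d \<le> w - 3" .
  moreover have "1 \<le> (x - 1) * d" using assms d_pos by simp
  ultimately show ?thesis by (simp only: mult.commute[of d]) linarith
qed

lemma dend_parent_eq_iff:
  "2 \<le> x \<Longrightarrow> dend_parent d w = x \<longleftrightarrow> d * (x - 1) + 3 \<le> w \<and> w < d * x + 3"
  using le_dend_parent_iff[of x w] le_dend_parent_iff[of "x + 1" w] by auto

lemma dend_parent_eq_1_iff: "dend_parent d w = 1 \<longleftrightarrow> w < d + 3"
  using le_dend_parent_iff[of 2 w] parent_ge_1[of w] by auto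

lemma dend_parent_mono: "mono (dend_parent d)"
  by (rule monoI) (simp add: dend_parent_def div_le_mono)

lemma children_eq:
  assumes "1 \<le> x"
  shows "{w. 2 \<le> w \<and> dend_parent d w = x} = (if x = 1 then {2..<d + 3} else {d * (x - 1) + 3..<d * x + 3})"
  using assms dend_parent_eq_1_iff dend_parent_eq_iff[of x] by auto

lemma card_children:
  assumes "1 \<le> x"
  shows "card {w. 2 \<le> w \<and> dend_parent d w = x} = (if x = 1 then d + 1 else d)"
proof -
  have "d * x = d * (x - 1) + d" if "2 \<le> x" using that by (cases x) auto
  then show ?thesis using assms by (simp add: children_eq)
qed

lemma least_unsaturated_vertex:
  assumes "1 \<le> m"
  shows "(LEAST v. v \<in> {1..m} \<and> card {e \<in> tree_edges m. v \<in> e} \<le> d) = dend_parent d (Suc m)"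
proof (rule Least_equality)
  define s where "s = dend_parent d (Suc m)"
  have s: "1 \<le> s" "s \<le> m" using parent_ge_1 parent_less[of "Suc m"] assms by (auto simp: s_def)
  have "{w \<in> {2..m}. dend_parent d w = s} \<subseteq> {w. 2 \<le> w \<and> dend_parent d w = s} - {Suc m}"
    by (auto simp: s_def)
  then have "card {w \<in> {2..m}. dend_parent d w = s} \<le> card {w. 2 \<le> w \<and> dend_parent d w = s} - 1"
    using card_mono[OF _ \<open>_ \<subseteq> _\<close>] s(1) assms by (simp add: children_eq s_def)
  moreover have "card ({s} \<inter> {2..m}) = (if s = 1 then 0 else 1)" using s by auto
  ultimately show "s \<in> {1..m} \<and> card {e \<in> tree_edges m. s \<in> e} \<le> d"
    using s card_children[OF s(1)] d_pos by (simp add: card_tree_edges_containing split: if_splits)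
next
  fix v assume v: "v \<in> {1..m} \<and> card {e \<in> tree_edges m. v \<in> e} \<le> d"
  show "dend_parent d (Suc m) \<le> v"
  proof (rule ccontr)
    assume less: "\<not> dend_parent d (Suc m) \<le> v"
    \<comment> \<open>by monotonicity of the parent map, all children of \<open>v\<close> precede \<open>m + 1\<close>\<close>
    have "{w \<in> {2..m}. dend_parent d w = v} = {w. 2 \<le> w \<and> dend_parent d w = v}"
      using less monoD[OF dend_parent_mono, of "Suc m"] by (auto simp: not_less_eq_eq[symmetric])
    then have "card {e \<in> tree_edges m. v \<in> e} = card ({v} \<inter> {2..m}) + (if v = 1 then d + 1 else d)"
      using v card_children[of v] by (simp add: card_tree_edges_containing)
    then show False using v by (auto split: if_splits)
  qed
qed

lemma dend_edges_eq_tree_edges: "dend_edges d n = tree_edges n"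
proof (cases n)
  case (Suc m)
  have "dend_edges d (Suc m) = tree_edges (Suc m)"
  proof (induction m)
    case (Suc m)
    have "{2..Suc (Suc m)} = insert (Suc (Suc m)) {2..Suc m}" by auto
    then have "tree_edges (Suc (Suc m)) = insert {Suc (Suc m), dend_parent d (Suc (Suc m))} (tree_edges (Suc m))"
      unfolding tree_edges_def by simp
    also have "\<dots> = insert {dend_parent d (Suc (Suc m)), Suc (Suc m)} (dend_edges d (Suc m))"
      unfolding Suc insert_commute[of "Suc (Suc m)" "dend_parent d (Suc (Suc m))" "{}"] ..
    also have "\<dots> = dend_edges d (Suc (Suc m))"
      using least_unsaturated_vertex[of "Suc m"] Suc by (simp add: Let_def)
    finally show ?case by simp
  qed (simp add: tree_edges_def)
  then show ?thesis using Suc by simp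
qed (simp add: tree_edges_def)

section \<open>Levels of the complete dendrimer\<close>

text \<open>\<open>level_start k\<close> is the first vertex of depth \<open>k + 1\<close>, i.e. the paper's \<open>n\<^sub>k\<close>.\<close>
primrec level_start :: "nat \<Rightarrow> nat" where
  "level_start 0 = 2"
| "level_start (Suc k) = d * (level_start k - 1) + 3"

definition level :: "nat \<Rightarrow> nat set" where
  "level k = (case k of 0 \<Rightarrow> {1} | Suc j \<Rightarrow> {level_start j..<level_start (Suc j)})"

definition levels_upto :: "nat \<Rightarrow> nat set" where
  "levels_upto k = {1..<level_start k}"

definition branching :: "nat \<Rightarrow> nat" where
  "branching k = (if k = 0 then d + 1 else d)"

lemma level_start_eq_geometric_sum: "level_start k = 2 + (d + 1) * (\<Sum>i<k. d ^ i)"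
proof (induction k)
  case (Suc k)
  have "(\<Sum>i<Suc k. d ^ i) = 1 + d * (\<Sum>i<k. d ^ i)"
    by (subst sum.lessThan_Suc_shift) (simp add: sum_distrib_left)
  then show ?case using Suc by (simp add: algebra_simps)
qed simp

lemma n_k_eq_level_start:
  assumes "2 \<le> d"
  shows "n_k d k = level_start k"
proof -
  have "int (d ^ k - 1) = int ((d - 1) * (\<Sum>i<k. d ^ i))"
    using assms power_diff_1_eq[of "int d" k] by (simp add: of_nat_diff)
  then have "d ^ k - 1 = (d - 1) * (\<Sum>i<k. d ^ i)" by (simp only: of_nat_eq_iff)
  then have "(d ^ k - 1) div (d - 1) = (\<Sum>i<k. d ^ i)" using assms by simp
  then show ?thesis by (simp add: n_k_def level_start_eq_geometric_sum)
qed

lemma level_start_ge_2: "2 \<le> level_start k"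
  by (cases k) simp_all

lemma level_start_less_Suc: "level_start k < level_start (Suc k)"
proof -
  have "level_start k - 1 \<le> d * (level_start k - 1)" using d_pos by simp
  then show ?thesis using level_start_ge_2[of k] unfolding level_start.simps by linarith
qed

lemma level_0 [simp]: "level 0 = {1}"
  by (simp add: level_def)

lemma levels_upto_0 [simp]: "levels_upto 0 = {1}"
  by (auto simp: levels_upto_def)

lemma finite_level [simp]: "finite (level k)"
  by (simp add: level_def split: nat.split)

lemma finite_levels_upto [simp]: "finite (levels_upto k)"
  by (simp add: levels_upto_def)

lemma levels_upto_Suc: "levels_upto (Suc k) = levels_upto k \<union> level (Suc k)"
  using level_start_less_Suc[of k] level_start_ge_2[of k] by (auto simp: levels_upto_def level_def)

lemma levels_upto_disjoint_level_Suc: "levels_upto k \<inter> level (Suc k) = {}"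
  by (auto simp: levels_upto_def level_def)

lemma level_subset_levels_upto: "level k \<subseteq> levels_upto k"
  using level_start_ge_2[of 0] levels_upto_Suc by (cases k) (auto simp: levels_upto_def)

lemma mem_level_Suc_iff: "v \<in> level (Suc k) \<longleftrightarrow> 2 \<le> v \<and> dend_parent d v \<in> level k"
proof (cases k)
  case 0
  then show ?thesis using dend_parent_eq_1_iff[of v] by (auto simp: level_def)
next
  case (Suc j)
  have "level_start j \<le> dend_parent d v \<longleftrightarrow> level_start (Suc j) \<le> v"
    "level_start (Suc j) \<le> dend_parent d v \<longleftrightarrow> level_start (Suc (Suc j)) \<le> v"
    using le_dend_parent_iff level_start_ge_2 by (simp_all add: mult.commute)
  then show ?thesis using Suc level_start_ge_2[of "Suc j"] by (auto simp: level_def not_le[symmetric])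
qed

lemma mem_level_eq_1_iff:
  assumes "v \<in> level k"
  shows "v = 1 \<longleftrightarrow> k = 0"
proof (cases k)
  case (Suc j)
  then show ?thesis using assms level_start_ge_2[of j] by (auto simp: level_def)
qed (use assms in simp)

lemma sum_level_Suc_parent:
  fixes g :: "nat \<Rightarrow> 'a::comm_semiring_1"
  shows "(\<Sum>v\<in>level (Suc k). g (dend_parent d v)) = of_nat (branching k) * (\<Sum>x\<in>level k. g x)"
proof -
  have "(\<Sum>v\<in>level (Suc k). g (dend_parent d v))
      = (\<Sum>x\<in>level k. \<Sum>v\<in>{v \<in> level (Suc k). dend_parent d v = x}. g (dend_parent d v))"
    by (rule sum.group[symmetric]) (auto simp: mem_level_Suc_iff)
  also have "\<dots> = (\<Sum>x\<in>level k. of_nat (branching k) * g x)"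
  proof (rule sum.cong)
    fix x assume x: "x \<in> level k"
    then have "1 \<le> x" using level_subset_levels_upto[of k] by (auto simp: levels_upto_def)
    have "{v \<in> level (Suc k). dend_parent d v = x} = {w. 2 \<le> w \<and> dend_parent d w = x}"
      using x by (auto simp: mem_level_Suc_iff)
    then show "(\<Sum>v\<in>{v \<in> level (Suc k). dend_parent d v = x}. g (dend_parent d v)) = of_nat (branching k) * g x"
      using card_children[OF \<open>1 \<le> x\<close>] mem_level_eq_1_iff[OF x] by (simp add: branching_def)
  qed simp
  finally show ?thesis by (simp add: sum_distrib_left)
qed

lemma card_level_Suc: "card (level (Suc k)) = branching k * card (level k)"
  using sum_level_Suc_parent[of "\<lambda>_. 1::nat" k] by simp

lemma card_levels_upto_Suc: "card (levels_upto (Suc k)) = card (levels_upto k) + card (level (Suc k))"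
  unfolding levels_upto_Suc by (rule card_Un_disjoint) (simp_all add: levels_upto_disjoint_level_Suc)

lemma parent_mem_levels_upto: "v \<in> level (Suc k) \<Longrightarrow> dend_parent d v \<in> levels_upto k"
  using level_subset_levels_upto by (auto simp: mem_level_Suc_iff)

lemma mem_levels_upto_less: "u \<in> levels_upto k \<Longrightarrow> v \<in> level (Suc k) \<Longrightarrow> u < v"
  by (auto simp: levels_upto_def level_def)

lemma dist_sum_level_Suc:
  "dist_sum q (level (Suc k)) (level (Suc k))
    = q\<^sup>2 * (branching k)\<^sup>2 * dist_sum q (level k) (level k) + (1 - q\<^sup>2) * card (level (Suc k))"
proof -
  let ?L = "level (Suc k)" and ?p = "dend_parent d"
  have "q ^ tree_dist u v = q\<^sup>2 * q ^ tree_dist (?p u) (?p v) + (if u = v then 1 - q\<^sup>2 else 0)"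
    if "u \<in> ?L" "v \<in> ?L" for u v
  proof (cases "u = v")
    case False
    have "?p u < v" "?p v < u"
      using that parent_mem_levels_upto mem_levels_upto_less by blast+
    then show ?thesis using tree_dist_parents[OF False] False by (simp add: power_add power2_eq_square)
  qed simp
  then have "dist_sum q ?L ?L = (\<Sum>u\<in>?L. \<Sum>v\<in>?L. q\<^sup>2 * q ^ tree_dist (?p u) (?p v)) + (1 - q\<^sup>2) * card ?L"
    unfolding dist_sum_def by (simp add: sum.distrib)
  also have "(\<Sum>u\<in>?L. \<Sum>v\<in>?L. q\<^sup>2 * q ^ tree_dist (?p u) (?p v))
      = (\<Sum>u\<in>?L. q\<^sup>2 * (branching k * (\<Sum>y\<in>level k. q ^ tree_dist (?p u) y)))"
    by (intro sum.cong refl) (simp add: sum_level_Suc_parent[of "\<lambda>y. q ^ tree_dist _ y"] flip: sum_distrib_left)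
  also have "\<dots> = q\<^sup>2 * branching k * (\<Sum>u\<in>?L. \<Sum>y\<in>level k. q ^ tree_dist (?p u) y)"
    by (simp add: sum_distrib_left mult.assoc)
  also have "(\<Sum>u\<in>?L. \<Sum>y\<in>level k. q ^ tree_dist (?p u) y) = branching k * dist_sum q (level k) (level k)"
    unfolding dist_sum_def by (rule sum_level_Suc_parent)
  finally show ?thesis by (simp add: power2_eq_square)
qed

lemma dist_sum_levels_upto_level_Suc:
  "dist_sum q (levels_upto k) (level (Suc k)) = q * branching k * dist_sum q (levels_upto k) (level k)"
proof -
  have "q ^ tree_dist u v = q * q ^ tree_dist u (dend_parent d v)"
    if "u \<in> levels_upto k" "v \<in> level (Suc k)" for u v
  proof -
    have "1 \<le> u" "u < v" using that mem_levels_upto_less by (auto simp: levels_upto_def)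
    then show ?thesis using tree_dist_parent_left[of u v] by (simp add: tree_dist_sym)
  qed
  then have "dist_sum q (levels_upto k) (level (Suc k))
      = (\<Sum>u\<in>levels_upto k. q * (\<Sum>v\<in>level (Suc k). q ^ tree_dist u (dend_parent d v)))"
    unfolding dist_sum_def by (simp add: sum_distrib_left)
  also have "\<dots> = (\<Sum>u\<in>levels_upto k. q * (branching k * (\<Sum>y\<in>level k. q ^ tree_dist u y)))"
    by (intro sum.cong refl) (simp add: sum_level_Suc_parent[of "\<lambda>y. q ^ tree_dist _ y"])
  finally show ?thesis by (simp add: dist_sum_def sum_distrib_left mult_ac)
qed

lemma dist_sum_levels_upto_Suc_level_Suc:
  "dist_sum q (levels_upto (Suc k)) (level (Suc k))
    = q * branching k * dist_sum q (levels_upto k) (level k) + dist_sum q (level (Suc k)) (level (Suc k))"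
  by (simp add: levels_upto_Suc dist_sum_Un_left levels_upto_disjoint_level_Suc
      dist_sum_levels_upto_level_Suc)

lemma dist_sum_levels_upto_Suc:
  "dist_sum q (levels_upto (Suc k)) (levels_upto (Suc k))
    = dist_sum q (levels_upto k) (levels_upto k) + 2 * q * branching k * dist_sum q (levels_upto k) (level k)
      + dist_sum q (level (Suc k)) (level (Suc k))"
proof -
  have "dist_sum q (levels_upto (Suc k)) (levels_upto (Suc k))
      = dist_sum q (levels_upto k) (levels_upto k) + 2 * dist_sum q (levels_upto k) (level (Suc k))
        + dist_sum q (level (Suc k)) (level (Suc k))"
    by (simp add: levels_upto_Suc dist_sum_Un_left dist_sum_Un_right levels_upto_disjoint_level_Suc
        dist_sum_commute[of q "level (Suc k)" "levels_upto k"])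
  then show ?thesis by (simp add: dist_sum_levels_upto_level_Suc)
qed

definition wiener_complete :: "real \<Rightarrow> nat \<Rightarrow> real" where
  "wiener_complete q k = dend_W d (level_start k - 1) q"

lemma wiener_complete_eq:
  "wiener_complete q k = (dist_sum q (levels_upto k) (levels_upto k) - card (levels_upto k)) / 2"
proof -
  have V: "{1..level_start k - 1} = levels_upto k"
    using level_start_ge_2[of k] by (auto simp: levels_upto_def)
  have "wiener_complete q k
      = ((\<Sum>u\<in>levels_upto k. \<Sum>v\<in>levels_upto k. q ^ gdist (tree_edges (level_start k - 1)) u v)
         - card (levels_upto k)) / 2"
    unfolding wiener_complete_def dend_W_def dend_edges_eq_tree_edges V
    by (simp add: wiener_poly_eq_sum_ordered_pairs)
  also have "\<dots> = (dist_sum q (levels_upto k) (levels_upto k) - card (levels_upto k)) / 2"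
    unfolding dist_sum_def using V by (simp add: gdist_tree_edges cong: sum.cong)
  finally show ?thesis .
qed

section \<open>The generating function\<close>

lemma annihilated_card_level:
  fixes q :: real
  shows "annihilated_by (q\<^sup>2 * d\<^sup>2) d (\<lambda>k. card (level k))"
proof -
  have "annihilated_by d (q\<^sup>2 * d\<^sup>2) (\<lambda>k. card (level k))"
    by (rule annihilated_by_first_order[where g = "\<lambda>_. 0"])
      (simp_all add: card_level_Suc branching_def numeral_eq_Suc)
  then show ?thesis by (simp add: annihilated_by_commute)
qed

lemma annihilated_dist_sum_level:
  fixes q :: real
  shows "annihilated_by (q\<^sup>2 * d\<^sup>2) d (\<lambda>k. dist_sum q (level k) (level k))"
  by (rule annihilated_by_first_order[where g = "\<lambda>k. (1 - q\<^sup>2) * card (level k)"])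
    (simp_all add: dist_sum_level_Suc card_level_Suc branching_def numeral_eq_Suc power_mult_distrib)

lemma annihilated_dist_sum_levels_upto_level:
  fixes q :: real
  shows "annihilated_by (q\<^sup>2 * d\<^sup>2) d (\<lambda>k. dist_sum q (levels_upto k) (level k))"
proof (rule annihilated_by_first_order_inhomogeneous[OF _ annihilated_dist_sum_level])
  show "dist_sum q (levels_upto (k + 2)) (level (k + 2))
      = q * d * dist_sum q (levels_upto (k + 1)) (level (k + 1)) + dist_sum q (level (k + 2)) (level (k + 2))" for k
    by (simp add: dist_sum_levels_upto_Suc_level_Suc branching_def numeral_eq_Suc)
  show "dist_sum q (levels_upto 3) (level 3) - (q\<^sup>2 * d\<^sup>2 + d) * dist_sum q (levels_upto 2) (level 2)
      + q\<^sup>2 * d\<^sup>2 * d * dist_sum q (levels_upto 1) (level 1) = 0"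
    by (simp add: numeral_eq_Suc dist_sum_levels_upto_Suc_level_Suc dist_sum_level_Suc card_level_Suc
        branching_def algebra_simps power2_eq_square)
qed

lemma annihilated_wiener_complete_differences:
  fixes q :: real
  shows "annihilated_by (q\<^sup>2 * d\<^sup>2) d (\<lambda>k. wiener_complete q (Suc k) - wiener_complete q k)"
proof (rule annihilated_by_cong)
  show "annihilated_by (q\<^sup>2 * d\<^sup>2) d (\<lambda>k. q * d * dist_sum q (levels_upto k) (level k)
      + (1 / 2 * dist_sum q (level (Suc k)) (level (Suc k)) + - 1 / 2 * card (level (Suc k))))"
    by (intro annihilated_by_add annihilated_by_scale annihilated_by_shift
        annihilated_dist_sum_levels_upto_level annihilated_dist_sum_level annihilated_card_level)
  show "wiener_complete q (Suc (Suc k)) - wiener_complete q (Suc k)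
      = q * d * dist_sum q (levels_upto (Suc k)) (level (Suc k))
        + (1 / 2 * dist_sum q (level (Suc (Suc k))) (level (Suc (Suc k)))
        + - 1 / 2 * card (level (Suc (Suc k))))" for k
    unfolding wiener_complete_eq
    by (simp add: dist_sum_levels_upto_Suc card_levels_upto_Suc branching_def field_simps)
qed

lemma wiener_complete_first_terms:
  fixes q c :: real
  defines "c \<equiv> d\<^sup>2 * q\<^sup>2"
  shows "wiener_complete q 0 = 0"
    and "wiener_complete q 1 = (d + 1) * q + (d + 1) * d / 2 * q\<^sup>2"
    and "wiener_complete q 2 - (1 + d + c) * wiener_complete q 1 = (d + 1) * d / 2 * q\<^sup>2"
    and "wiener_complete q 3 - (1 + d + c) * wiener_complete q 2 + (d + c + d * c) * wiener_complete q 1 = 0"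
  unfolding c_def wiener_complete_eq
  by (simp_all add: numeral_eq_Suc dist_sum_levels_upto_Suc_level_Suc dist_sum_level_Suc card_level_Suc
      branching_def dist_sum_levels_upto_Suc card_levels_upto_Suc field_simps power2_eq_square)

lemma wiener_complete_recurrence:
  fixes q c :: real
  defines "c \<equiv> d\<^sup>2 * q\<^sup>2"
  shows "wiener_complete q (k + 4) - (1 + d + c) * wiener_complete q (k + 3)
    + (d + c + d * c) * wiener_complete q (k + 2) - d * c * wiener_complete q (k + 1) = 0"
proof -
  have "annihilated_by d c (\<lambda>k. wiener_complete q (Suc k) - wiener_complete q k)"
    using annihilated_wiener_complete_differences[of q]
    by (simp add: annihilated_by_commute c_def mult.commute power_mult_distrib)
  then show ?thesis unfolding annihilated_by_differences by (simp add: mult.commute)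
qed

lemma fps_wiener_complete_mult_denominator:
  fixes q :: real
  shows "Abs_fps (wiener_complete q)
      * ((1 - fps_X) * (1 - fps_const (real d) * fps_X) * (1 - fps_const (real d ^ 2 * q ^ 2) * fps_X))
    = fps_X * (fps_const (real (d + 1) * q) + fps_const (real ((d + 1) choose 2) * q ^ 2) * (1 + fps_X))"
    (is "?W * ?D = ?N")
proof (rule fps_ext)
  fix n :: nat
  have choose_2: "real ((d + 1) choose 2) = (d + 1) * d / 2"
    by (simp add: choose_two real_of_nat_div algebra_simps)
  have "n = 0 \<or> n = 1 \<or> n = 2 \<or> n = 3 \<or> (\<exists>m. n = m + 4)" by presburger
  then consider "n = 0" | "n = 1" | "n = 2" | "n = 3" | m where "n = m + 4" by blast
  then show "(?W * ?D) $ n = ?N $ n"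
  proof cases
    case 1
    then show ?thesis unfolding fps_mult_cubic_nth using wiener_complete_first_terms(1)[of q] by simp
  next
    case 2
    then show ?thesis unfolding fps_mult_cubic_nth choose_2 using wiener_complete_first_terms(1,2)[of q]
      by (simp add: algebra_simps)
  next
    case 3
    then show ?thesis unfolding fps_mult_cubic_nth choose_2 using wiener_complete_first_terms(1,3)[of q]
      by (simp add: numeral_eq_Suc power_mult_distrib algebra_simps)
  next
    case 4
    then show ?thesis unfolding fps_mult_cubic_nth using wiener_complete_first_terms(1,4)[of q]
      by (simp add: numeral_eq_Suc power_mult_distrib algebra_simps)
  next
    case 5
    then show ?thesis unfolding fps_mult_cubic_nth using wiener_complete_recurrence[of q m]
      by (simp add: numeral_eq_Suc power_mult_distrib mult_ac)
  qed
qed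

end

theorem proposition4p1:
  fixes d :: nat and q :: real
  assumes "d \<ge> 2"
  shows "Abs_fps (\<lambda>k. if k = 0 then 0 else dend_W d (n_k d k - 1) q)
       = fps_X * (fps_const (real (d + 1) * q)
                  + fps_const (real ((d + 1) choose 2) * q ^ 2) * (1 + fps_X))
         / ((1 - fps_X) * (1 - fps_const (real d) * fps_X)
            * (1 - fps_const (real d ^ 2 * q ^ 2) * fps_X))"
    (is "Abs_fps ?w = ?N / ?D")
proof -
  interpret dendrimer d using assms by unfold_locales simp
  have "?w = wiener_complete q"
    using assms wiener_complete_first_terms(1)[of q] by (auto simp: n_k_eq_level_start wiener_complete_def)
  then have "Abs_fps ?w * ?D = ?N" by (simp add: fps_wiener_complete_mult_denominator)
  moreover have "?D $ 0 \<noteq> 0" by simp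
  ultimately have "?N / ?D = Abs_fps ?w * (?D * inverse ?D)" by (simp add: fps_divide_unit mult.assoc)
  also have "\<dots> = Abs_fps ?w" using \<open>?D $ 0 \<noteq> 0\<close> by (simp add: inverse_mult_eq_1')
  finally show ?thesis by simp
qed

end
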